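(* Let $P_n$ be the path graph with $n$ nodes labeled consecutively from one end to the other as $1,2,\dots,n$. Then the sequence $C=(\theta_{12},\theta_{13},\dots,\theta_{1n})$ of communicability angles between node $1$ and the other nodes is monotonic.
   Context: For a graph with adjacency matrix $A$, the communicability is $G_{pq}=(e^{A})_{pq}$ and the communicability angle $\theta_{pq}\in[0^\circ,90^\circ]$ between nodes $p,q$ is defined by $\cos\theta_{pq}=G_{pq}/\sqrt{G_{pp}G_{qq}}$. *)

theory Defs
  imports Complex_Main
begin

text \<open>Square matrices of size n with rows/columns indexed by 1..n, represented
  as functions nat => nat => real (entries outside 1..n are irrelevant).\<close>

definition path_adj :: "nat \<Rightarrow> nat \<Rightarrow> nat \<Rightarrow> real" where
  "path_adj n i j = (if i \<in> {1..n} \<and> j \<in> {1..n} \<and> (i = j + 1 \<or> j = i + 1) then 1 else 0)"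

fun mat_pow :: "nat \<Rightarrow> (nat \<Rightarrow> nat \<Rightarrow> real) \<Rightarrow> nat \<Rightarrow> nat \<Rightarrow> nat \<Rightarrow> real" where
  "mat_pow n A 0 = (\<lambda>i j. if i = j then 1 else 0)"
| "mat_pow n A (Suc k) = (\<lambda>i j. \<Sum>l\<in>{1..n}. mat_pow n A k i l * A l j)"

definition mat_exp :: "nat \<Rightarrow> (nat \<Rightarrow> nat \<Rightarrow> real) \<Rightarrow> nat \<Rightarrow> nat \<Rightarrow> real" where
  "mat_exp n A p q = (\<Sum>k. mat_pow n A k p q / fact k)"

definition path_comm :: "nat \<Rightarrow> nat \<Rightarrow> nat \<Rightarrow> real" where
  "path_comm n p q = mat_exp n (path_adj n) p q"

definition path_comm_angle :: "nat \<Rightarrow> nat \<Rightarrow> nat \<Rightarrow> real" where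
  "path_comm_angle n p q =
     arccos (path_comm n p q / sqrt (path_comm n p p * path_comm n q q))"

end

theory Submission
  imports Defs "HOL-Analysis.Complex_Transcendental"
begin

text \<open>
  Write G = e^A. As cos \<theta>_1j = G_1j / sqrt (G_11 G_jj), the angles increase along the path as soon as
  G_1,j+1^2 G_jj \<le> G_1j^2 G_j+1,j+1 for every j. Counting closed walks of length at most 3 and
  bounding the rest of the series by the tail of e^2 puts every diagonal entry into [3/2, 3.07].
  Off the diagonal, A e^A = e^A A gives G_1,q-1 + G_1,q+1 = \<Sum>_k (A^(k+1))_1q / k!, and since
  (A^k)_1q = 0 for k < q - 1 this is at least (q - 1) G_1q. Downward induction from the end of the
  path turns this into (q^2 - 1) G_1,q+1 \<le> q G_1q, so G_1,j+1 \<le> 2/3 G_1j for j \<ge> 2, which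
  suffices because (2/3)^2 \<cdot> 3.07 < 3/2. The case j = 1 follows from the numerical bounds
  G_12 \<le> 3/2 \<le> G_11 \<le> 2 \<le> G_22, obtained by comparing with walks on a half-line.
\<close>

lemma mat_pow_nonneg:
  assumes "\<And>i j. 0 \<le> A i j"
  shows "0 \<le> mat_pow n A k p q"
  using assms by (induction k arbitrary: q) (auto intro!: sum_nonneg mult_nonneg_nonneg)

lemma mat_pow_1:
  assumes "p \<in> {1..n}"
  shows "mat_pow n A 1 p q = A p q"
  using assms by (simp add: if_distrib[of "\<lambda>x. x * _"] sum.delta cong: if_cong)

lemma exp_sums: "(\<lambda>k. c ^ k / fact k) sums exp (c :: real)"
  using exp_converges[of c] by (simp add: divide_inverse mult.commute)

context
  fixes n :: nat and A :: "nat \<Rightarrow> nat \<Rightarrow> real" and c :: real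
  assumes nonneg: "\<And>i j. 0 \<le> A i j"
    and colsum_le: "\<And>j. (\<Sum>l\<in>{1..n}. A l j) \<le> c"
begin

lemma mat_pow_le_power: "mat_pow n A k p q \<le> c ^ k"
proof (induction k arbitrary: q)
  case 0
  show ?case by simp
next
  case (Suc k)
  have "0 \<le> c"
    using colsum_le[of q] sum_nonneg[of "{1..n}" "\<lambda>l. A l q"] nonneg by fastforce
  have "mat_pow n A (Suc k) p q \<le> (\<Sum>l\<in>{1..n}. c ^ k * A l q)"
    by (auto intro!: sum_mono mult_right_mono Suc nonneg)
  also have "\<dots> = c ^ k * (\<Sum>l\<in>{1..n}. A l q)"
    by (simp add: sum_distrib_left)
  also have "\<dots> \<le> c ^ k * c"
    using colsum_le \<open>0 \<le> c\<close> by (intro mult_left_mono) auto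
  finally show ?case
    by (simp add: mult.commute)
qed

lemma summable_mat_pow_fact: "summable (\<lambda>k. mat_pow n A k p q / fact k)"
proof (rule summable_comparison_test[OF _ sums_summable[OF exp_sums]])
  show "\<exists>N. \<forall>k\<ge>N. norm (mat_pow n A k p q / fact k) \<le> c ^ k / fact k"
    using mat_pow_le_power mat_pow_nonneg[OF nonneg] by (auto intro!: divide_right_mono)
qed

lemma mat_exp_nonneg: "0 \<le> mat_exp n A p q"
  unfolding mat_exp_def
  by (intro suminf_nonneg summable_mat_pow_fact) (simp add: mat_pow_nonneg nonneg)

lemma sum_le_mat_exp: "(\<Sum>k<N. mat_pow n A k p q / fact k) \<le> mat_exp n A p q"
  unfolding mat_exp_def
  by (intro sum_le_suminf summable_mat_pow_fact) (simp_all add: mat_pow_nonneg nonneg)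

lemma mat_exp_le_sum_plus_tail:
  "mat_exp n A p q \<le> (\<Sum>k<N. mat_pow n A k p q / fact k) + (exp c - (\<Sum>k<N. c ^ k / fact k))"
proof -
  let ?f = "\<lambda>k. mat_pow n A k p q / fact k"
  have tail: "(\<lambda>k. c ^ (k + N) / fact (k + N)) sums (exp c - (\<Sum>k<N. c ^ k / fact k))"
    using exp_sums sums_iff_shift[of "\<lambda>k. c ^ k / fact k" N] by simp
  have "(\<lambda>k. ?f (k + N)) sums (\<Sum>k. ?f (k + N))"
    by (intro summable_sums summable_ignore_initial_segment summable_mat_pow_fact)
  then have "(\<Sum>k. ?f (k + N)) \<le> exp c - (\<Sum>k<N. c ^ k / fact k)"
    using tail by (rule sums_le[rotated]) (simp add: mat_pow_le_power divide_right_mono)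
  then show ?thesis
    using suminf_split_initial_segment[OF summable_mat_pow_fact[of p q], of N]
    unfolding mat_exp_def by linarith
qed

end

declare mat_pow.simps(2) [simp del]

lemma path_adj_nonneg: "0 \<le> path_adj n i j"
  by (simp add: path_adj_def)

lemma path_adj_colsum_le: "(\<Sum>l\<in>{1..n}. path_adj n l j) \<le> 2"
proof -
  have "(\<Sum>l\<in>{1..n}. path_adj n l j)
          \<le> (\<Sum>l\<in>{1..n}. (if l = j - 1 then 1 else 0) + (if l = j + 1 then 1 else 0))"
    by (rule sum_mono) (auto simp: path_adj_def)
  also have "\<dots> \<le> 2"
    by (simp add: sum.distrib sum.delta')
  finally show ?thesis .
qed

abbreviation path_walks :: "nat \<Rightarrow> nat \<Rightarrow> nat \<Rightarrow> nat \<Rightarrow> real" where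
  "path_walks n k \<equiv> mat_pow n (path_adj n) k"

lemma path_walks_nonneg: "0 \<le> path_walks n k p q"
  by (intro mat_pow_nonneg path_adj_nonneg)

lemma summable_path_walks_fact: "summable (\<lambda>k. path_walks n k p q / fact k)"
  by (intro summable_mat_pow_fact[where c=2] path_adj_nonneg path_adj_colsum_le)

lemma path_comm_nonneg: "0 \<le> path_comm n p q"
  unfolding path_comm_def by (intro mat_exp_nonneg[where c=2] path_adj_nonneg path_adj_colsum_le)

lemma sum_le_path_comm: "(\<Sum>k<N. path_walks n k p q / fact k) \<le> path_comm n p q"
  unfolding path_comm_def by (intro sum_le_mat_exp[where c=2] path_adj_nonneg path_adj_colsum_le)

lemma path_comm_le_sum_plus_tail:
  "path_comm n p q \<le> (\<Sum>k<N. path_walks n k p q / fact k) + (exp 2 - (\<Sum>k<N. 2 ^ k / fact k))"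
  unfolding path_comm_def by (intro mat_exp_le_sum_plus_tail path_adj_nonneg path_adj_colsum_le)

lemma path_walks_parity: "odd (k + p + q) \<Longrightarrow> path_walks n k p q = 0"
proof (induction k arbitrary: q)
  case 0
  then show ?case by auto
next
  case (Suc k)
  have "path_walks n k p l * path_adj n l q = 0" for l
  proof (cases "q = l + 1 \<or> l = q + 1")
    case True
    then show ?thesis using Suc by auto
  qed (auto simp: path_adj_def)
  then show ?case by (simp add: mat_pow.simps sum.neutral)
qed

lemma path_walks_outside: "q \<notin> {1..n} \<Longrightarrow> q \<noteq> p \<or> k \<noteq> 0 \<Longrightarrow> path_walks n k p q = 0"
  by (cases k) (auto simp: mat_pow.simps path_adj_def)

lemma path_walks_Suc:
  assumes p: "p \<in> {1..n}" and q: "q \<in> {1..n}"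
  shows "path_walks n (Suc k) p q = path_walks n k p (q - 1) + path_walks n k p (q + 1)"
proof -
  have "path_walks n (Suc k) p q = (\<Sum>l\<in>{1..n} \<inter> {q - 1, q + 1}. path_walks n k p l)"
    using q
    by (auto simp: mat_pow.simps path_adj_def sum.inter_restrict if_distrib[of "\<lambda>x. _ * x"]
        intro!: sum.cong)
  also have "\<dots> = (\<Sum>l\<in>{q - 1, q + 1}. path_walks n k p l)"
    using p q by (intro sum.mono_neutral_left) (auto intro: path_walks_outside)
  also have "\<dots> = path_walks n k p (q - 1) + path_walks n k p (q + 1)"
    using q by simp
  finally show ?thesis .
qed

lemma path_walks_far: "k + 1 < q \<Longrightarrow> path_walks n k 1 q = 0"
proof (induction k arbitrary: q)
  case 0
  then show ?case by simp
next
  case (Suc k)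
  show ?case
  proof (cases "q \<in> {1..n}")
    case True
    then show ?thesis
      using Suc by (simp add: path_walks_Suc)
  next
    case False
    then show ?thesis
      using Suc.prems by (intro path_walks_outside) auto
  qed
qed

lemma path_walks_shortest: "k + 1 \<le> n \<Longrightarrow> 1 \<le> path_walks n k 1 (k + 1)"
proof (induction k)
  case 0
  then show ?case by simp
next
  case (Suc k)
  then have "path_walks n (Suc k) 1 (Suc k + 1) = path_walks n k 1 (k + 1) + path_walks n k 1 (k + 3)"
    by (subst path_walks_Suc) (auto simp: numeral_eq_Suc)
  then show ?case
    using Suc path_walks_nonneg[of n k 1 "k + 3"] by simp
qed

text \<open>Walks from 1 on the infinite half-line 1, 2, 3, \<dots>; they dominate walks on P_n.\<close>
fun half_line_walks :: "nat \<Rightarrow> nat \<Rightarrow> real" where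
  "half_line_walks 0 q = of_bool (q = 1)"
| "half_line_walks (Suc k) q =
     (if q = 0 then 0 else half_line_walks k (q - 1) + half_line_walks k (q + 1))"

lemma half_line_walks_nonneg: "0 \<le> half_line_walks k q"
  by (induction k arbitrary: q) auto

lemma path_walks_le_half_line_walks: "path_walks n k 1 q \<le> half_line_walks k q"
proof (induction k arbitrary: q)
  case 0
  then show ?case by simp
next
  case (Suc k)
  show ?case
  proof (cases "q \<in> {1..n}")
    case True
    then show ?thesis
      using Suc by (simp add: path_walks_Suc add_mono)
  next
    case False
    then show ?thesis
      using half_line_walks_nonneg[of "Suc k" q] by (simp add: path_walks_outside)
  qed
qed

lemma path_walks_2_diag:
  assumes "p \<in> {1..n}"
  shows "path_walks n 2 p p = path_adj n p (p - 1) + path_adj n p (p + 1)"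
  using path_walks_Suc[OF assms assms, of 1] mat_pow_1[OF assms] by (simp add: numeral_2_eq_2)

lemma exp_2_le: "exp (2 :: real) \<le> 73984 / 10000"
proof -
  have "exp (2 :: real) = exp 1 * exp 1"
    by (simp flip: exp_add)
  also have "\<dots> \<le> (272 / 100) * (272 / 100)"
    using e_less_272 by (intro mult_mono) auto
  finally show ?thesis by simp
qed

lemma path_comm_diag_le:
  assumes "p \<in> {1..n}"
  shows "path_comm n p p \<le> 307 / 100"
proof -
  have "path_walks n 2 p p \<le> 2"
    using path_walks_2_diag[OF assms] by (simp add: path_adj_def)
  moreover have "path_walks n 1 p p = 0" "path_walks n 3 p p = 0"
    by (rule path_walks_parity; simp)+
  ultimately show ?thesis
    using path_comm_le_sum_plus_tail[where N=4 and n=n and p=p and q=p] exp_2_le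
    by (simp add: eval_nat_numeral fact_Suc)
qed

lemma path_comm_diag_ge:
  assumes "p \<in> {1..n}"
  shows "1 + path_walks n 2 p p / 2 \<le> path_comm n p p"
proof -
  have "path_walks n 1 p p = 0"
    by (rule path_walks_parity) simp
  then show ?thesis
    using sum_le_path_comm[where N=3 and n=n and p=p and q=p] by (simp add: eval_nat_numeral)
qed

lemma path_comm_diag_ge_3_halves:
  assumes "p \<in> {1..n}" "2 \<le> n"
  shows "3 / 2 \<le> path_comm n p p"
proof -
  have "1 \<le> path_walks n 2 p p"
    using path_walks_2_diag[OF assms(1)] assms by (auto simp: path_adj_def)
  then show ?thesis
    using path_comm_diag_ge[OF assms(1)] by simp
qed

lemma path_comm_2_2_ge: "3 \<le> n \<Longrightarrow> 2 \<le> path_comm n 2 2"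
  using path_comm_diag_ge[of 2 n] path_walks_2_diag[of 2 n] by (simp add: path_adj_def)

lemma path_comm_first_le_half_line:
  "path_comm n 1 q \<le> (\<Sum>k<7. half_line_walks k q / fact k) + (exp 2 - (\<Sum>k<7. 2 ^ k / fact k))"
proof -
  have "(\<Sum>k<7. path_walks n k 1 q / fact k) \<le> (\<Sum>k<7. half_line_walks k q / fact k)"
    by (intro sum_mono divide_right_mono path_walks_le_half_line_walks) auto
  then show ?thesis
    using path_comm_le_sum_plus_tail[where N=7 and n=n and p=1 and q=q] by linarith
qed

lemma path_comm_1_1_le: "path_comm n 1 1 \<le> 2"
  using path_comm_first_le_half_line[of n 1] exp_2_le by (simp add: eval_nat_numeral fact_Suc)

lemma path_comm_1_2_le: "path_comm n 1 2 \<le> 3 / 2"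
  using path_comm_first_le_half_line[of n 2] exp_2_le by (simp add: eval_nat_numeral fact_Suc)

lemma path_comm_first_pos:
  assumes "j \<in> {1..n}"
  shows "0 < path_comm n 1 j"
proof -
  have "0 < path_walks n (j - 1) 1 j / fact (j - 1)"
    using path_walks_shortest[of "j - 1" n] assms by simp
  also have "\<dots> \<le> (\<Sum>k<j. path_walks n k 1 j / fact k)"
    using assms by (intro member_le_sum) (auto intro: divide_nonneg_pos path_walks_nonneg)
  also have "\<dots> \<le> path_comm n 1 j"
    by (rule sum_le_path_comm)
  finally show ?thesis .
qed

lemma path_walks_first_Suc_sums:
  assumes "q \<in> {1..n}"
  shows "(\<lambda>k. path_walks n (Suc k) 1 q / fact k) sums (path_comm n 1 (q - 1) + path_comm n 1 (q + 1))"
proof -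
  have "(\<lambda>k. path_walks n k 1 (q - 1) / fact k + path_walks n k 1 (q + 1) / fact k)
          sums (path_comm n 1 (q - 1) + path_comm n 1 (q + 1))"
    unfolding path_comm_def mat_exp_def by (intro sums_add summable_sums summable_path_walks_fact)
  then show ?thesis
    using assms by (simp add: path_walks_Suc add_divide_distrib)
qed

lemma path_comm_first_three_term:
  assumes q: "q \<in> {1..n}"
  shows "(real q - 1) * path_comm n 1 q \<le> path_comm n 1 (q - 1) + path_comm n 1 (q + 1)"
proof -
  let ?w = "\<lambda>k. path_walks n k 1 q"
  have "(\<lambda>k. ?w k / fact k) sums path_comm n 1 q"
    unfolding path_comm_def mat_exp_def by (intro summable_sums summable_path_walks_fact)
  then have "(\<lambda>k. ?w (Suc k) / fact (Suc k)) sums (path_comm n 1 q - ?w 0 / fact 0)"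
    by (subst sums_Suc_iff) simp
  \<comment> \<open>the dropped term (q - 1) * ?w 0 vanishes, since ?w 0 = 0 unless q = 1\<close>
  from sums_mult[OF this, of "real q - 1"]
  have scaled: "(\<lambda>k. (real q - 1) * (?w (Suc k) / fact (Suc k))) sums ((real q - 1) * path_comm n 1 q)"
    by (cases "q = 1") simp_all
  have termwise: "(real q - 1) * (?w (Suc k) / fact (Suc k)) \<le> ?w (Suc k) / fact k" for k
  proof (cases "Suc k + 1 < q")
    case True
    then show ?thesis by (simp only: path_walks_far)
  next
    case False
    then have "(real q - 1) / real (Suc k) \<le> 1"
      using q by (simp add: field_simps)
    then have "((real q - 1) / real (Suc k)) * (?w (Suc k) / fact k) \<le> ?w (Suc k) / fact k"
      using q by (intro mult_left_le_one_le divide_nonneg_pos path_walks_nonneg) auto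
    then show ?thesis
      by (simp add: fact_Suc field_simps del: of_nat_Suc)
  qed
  show ?thesis
    using sums_le[OF termwise scaled path_walks_first_Suc_sums[OF q]] .
qed

lemma path_comm_first_decay:
  assumes "1 \<le> q" "q \<le> n"
  shows "(real q ^ 2 - 1) * path_comm n 1 (q + 1) \<le> real q * path_comm n 1 q"
  using assms
proof (induction "n - q" arbitrary: q)
  case 0
  then have "path_comm n 1 (q + 1) = 0"
    by (simp add: path_comm_def mat_exp_def path_walks_outside)
  then show ?case
    using path_comm_nonneg[of n 1 q] by simp
next
  case (Suc d)
  define x a b c where "x = real q" and "a = path_comm n 1 q"
    and "b = path_comm n 1 (q + 1)" and "c = path_comm n 1 (q + 2)"
  have IH: "((x + 1) ^ 2 - 1) * c \<le> (x + 1) * b"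
    using Suc.hyps(1)[of "q + 1"] Suc.hyps(2) Suc.prems
    by (simp add: x_def b_def c_def add.commute)
  have three_term: "x * b \<le> a + c"
    using path_comm_first_three_term[of "q + 1" n] Suc
    by (simp add: x_def a_def b_def c_def add.commute)
  have "x \<ge> 1" "c \<ge> 0"
    using Suc.prems path_comm_nonneg by (auto simp: x_def c_def)
  then have "(x + 1) * (x * c) \<le> ((x + 1) ^ 2 - 1) * c"
    by (simp add: power2_eq_square algebra_simps mult_right_mono)
  with IH have "(x + 1) * (x * c) \<le> (x + 1) * b"
    by linarith
  then have "x * c \<le> b"
    using \<open>x \<ge> 1\<close> by (simp add: mult_le_cancel_left_pos)
  moreover have "x * (x * b) \<le> x * (a + c)"
    using three_term \<open>x \<ge> 1\<close> by (intro mult_left_mono) auto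
  ultimately show ?case
    by (simp add: x_def a_def b_def power2_eq_square algebra_simps)
qed

lemma path_comm_first_ratio:
  assumes "2 \<le> j" "j \<le> n"
  shows "3 / 2 * path_comm n 1 (j + 1) \<le> path_comm n 1 j"
proof -
  have coeff: "3 / 2 * real j \<le> real j ^ 2 - 1"
  proof -
    have "0 \<le> (real j - 2) * (real j + 1 / 2)"
      using assms by simp
    then show ?thesis
      by (simp add: power2_eq_square algebra_simps)
  qed
  have "real j * (3 / 2 * path_comm n 1 (j + 1)) \<le> (real j ^ 2 - 1) * path_comm n 1 (j + 1)"
    using mult_right_mono[OF coeff path_comm_nonneg[of n 1 "j + 1"]] by (simp only: ac_simps)
  also have "\<dots> \<le> real j * path_comm n 1 j"
    using assms by (intro path_comm_first_decay) auto
  finally show ?thesis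
    using assms by (simp add: mult_le_cancel_left_pos)
qed

lemma path_comm_first_sq_mult_diag_le:
  assumes "3 \<le> n" "1 \<le> j" "j < n"
  shows "path_comm n 1 (j + 1) ^ 2 * path_comm n j j \<le> path_comm n 1 j ^ 2 * path_comm n (j + 1) (j + 1)"
proof (cases "j = 1")
  case True
  have "3 / 2 \<le> path_comm n 1 1" "path_comm n 1 2 \<le> 3 / 2"
    using assms path_comm_diag_ge_3_halves[of 1 n] path_comm_1_2_le[of n] by auto
  then have "path_comm n 1 2 ^ 2 \<le> path_comm n 1 1 ^ 2"
    using path_comm_nonneg[of n 1 2] by (intro power_mono) auto
  moreover have "path_comm n 1 1 \<le> path_comm n 2 2"
    using path_comm_1_1_le[of n] path_comm_2_2_ge assms by fastforce
  ultimately show ?thesis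
    using True path_comm_nonneg[of n 1 1] by (simp add: mult_mono numeral_2_eq_2)
next
  case False
  define a b where "a = path_comm n 1 j" and "b = path_comm n 1 (j + 1)"
  have "0 \<le> b" "3 / 2 * b \<le> a"
    using assms False path_comm_nonneg path_comm_first_ratio[of j n] by (auto simp: b_def a_def)
  then have "(3 / 2 * b) ^ 2 \<le> a ^ 2"
    by (intro power_mono) auto
  then have "9 / 4 * b ^ 2 \<le> a ^ 2"
    by (simp add: power2_eq_square)
  moreover have "path_comm n j j \<le> 307 / 100" "3 / 2 \<le> path_comm n (j + 1) (j + 1)"
    using assms path_comm_diag_le[of j n] path_comm_diag_ge_3_halves[of "j + 1" n] by auto
  ultimately have "b ^ 2 * path_comm n j j \<le> 4 / 9 * a ^ 2 * (307 / 100)"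
    by (intro mult_mono) (auto simp: path_comm_nonneg)
  also have "\<dots> \<le> a ^ 2 * (3 / 2)"
    by simp
  also have "\<dots> \<le> a ^ 2 * path_comm n (j + 1) (j + 1)"
    using \<open>3 / 2 \<le> path_comm n (j + 1) (j + 1)\<close> by (intro mult_left_mono) auto
  finally show ?thesis
    by (simp add: a_def b_def)
qed

lemma divide_sqrt_le_divide_sqrt:
  fixes a b c G G' :: real
  assumes "0 < c" "0 < G" "0 < G'" "0 \<le> a" "0 \<le> b" and "b ^ 2 * G \<le> a ^ 2 * G'"
  shows "b / sqrt (c * G') \<le> a / sqrt (c * G)"
proof (rule power2_le_imp_le)
  show "0 \<le> a / sqrt (c * G)"
    using assms by simp
  have "b ^ 2 * (c * G) \<le> a ^ 2 * (c * G')"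
    using mult_left_mono[OF assms(6), of c] assms(1) by (simp add: ac_simps)
  then have "b ^ 2 / (c * G') \<le> a ^ 2 / (c * G)"
    using assms by (simp add: divide_simps)
  then show "(b / sqrt (c * G')) ^ 2 \<le> (a / sqrt (c * G)) ^ 2"
    using assms by (simp add: power_divide)
qed

definition path_comm_cos :: "nat \<Rightarrow> nat \<Rightarrow> real" where
  "path_comm_cos n j = path_comm n 1 j / sqrt (path_comm n 1 1 * path_comm n j j)"

lemma path_comm_angle_first: "path_comm_angle n 1 j = arccos (path_comm_cos n j)"
  unfolding path_comm_angle_def path_comm_cos_def ..

lemma path_comm_cos_nonneg: "0 \<le> path_comm_cos n j"
  unfolding path_comm_cos_def by (simp add: path_comm_nonneg)

lemma path_comm_cos_1: "1 \<le> n \<Longrightarrow> path_comm_cos n 1 = 1"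
  unfolding path_comm_cos_def using path_comm_first_pos[of 1 n] by simp

lemma path_comm_cos_Suc_le:
  assumes "3 \<le> n" "1 \<le> j" "j < n"
  shows "path_comm_cos n (Suc j) \<le> path_comm_cos n j"
  unfolding path_comm_cos_def using assms path_comm_first_sq_mult_diag_le[OF assms]
  by (intro divide_sqrt_le_divide_sqrt path_comm_first_pos path_comm_nonneg
      order.strict_trans2[OF _ path_comm_diag_ge_3_halves]) auto

lemma path_comm_cos_antimono:
  assumes "3 \<le> n" "1 \<le> i" "i \<le> j" "j \<le> n"
  shows "path_comm_cos n j \<le> path_comm_cos n i"
  using assms(3,4)
proof (induction j rule: dec_induct)
  case (step j)
  then show ?case
    using path_comm_cos_Suc_le[of n j] assms by force
qed simp

theorem proposition5p2:
  fixes n :: nat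
  shows "(\<forall>i j. 2 \<le> i \<and> i \<le> j \<and> j \<le> n \<longrightarrow>
            path_comm_angle n 1 i \<le> path_comm_angle n 1 j)
       \<or> (\<forall>i j. 2 \<le> i \<and> i \<le> j \<and> j \<le> n \<longrightarrow>
            path_comm_angle n 1 j \<le> path_comm_angle n 1 i)"
proof (rule disjI1, intro allI impI)
  fix i j
  assume ij: "2 \<le> i \<and> i \<le> j \<and> j \<le> n"
  show "path_comm_angle n 1 i \<le> path_comm_angle n 1 j"
  proof (cases "3 \<le> n")
    case False
    with ij have "i = j" by auto
    then show ?thesis by simp
  next
    case True
    have "path_comm_cos n j \<le> path_comm_cos n i" "path_comm_cos n i \<le> path_comm_cos n 1"
      using ij True by (auto intro: path_comm_cos_antimono)
    then show ?thesis
      unfolding path_comm_angle_first using path_comm_cos_1[of n] path_comm_cos_nonneg[of n j] True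
      by (intro arccos_le_arccos) auto
  qed
qed

end
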